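(* Let $f\colon\mathbb{Z}_{\ge1}\times\mathbb{Z}_{\ge1}\to\mathbb{Z}$ be any function such that for all $k,h\ge1$ every finite digraph $G$ with $\delta^+(G)\geq f(k,h)$ contains $S^-_{k,h}$ as a subgraph. Let $k\geq 1$ and $\ell\geq 2$. Then every finite digraph $G$ with $\delta^+(G)\geq f(k,3k\ell^{k+1})+2k\ell^k$ contains $T(k,\ell)$ as a subgraph.
   Context: Digraphs are finite, have no loops and no multiple copies of the same edge, but may contain two edges in opposite directions between a pair of vertices. $\delta^+(G)$ is the minimum out-degree. $S^-_{k,h}$ is the $(k-1)$-subdivision of the in-star with $h$ leaves: a centre vertex together with $h$ directed paths of length $k$ ending at the centre, pairwise sharing only the centre. (A function $f$ as in the hypothesis exists by a result of Aboulker, Cohen, Havet, Lochet, Moura and Thomassé.) $B^+_{k,\ell}$ is the complete $\ell$-ary tree of depth $k$ with all edges oriented away from the root. $T(k,\ell)$ is the oriented tree obtained from $B^+_{k,\ell}$ by identifying each leaf with the centre of a new (disjoint) copy of $S^-_{k,\ell}$. Containing a digraph as a subgraph means having a subgraph isomorphic to it. *)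

theory Defs
  imports Main
begin

definition is_digraph :: "'a set \<Rightarrow> ('a \<times> 'a) set \<Rightarrow> bool" where
  "is_digraph V E \<longleftrightarrow> finite V \<and> V \<noteq> {} \<and> E \<subseteq> V \<times> V \<and> (\<forall>v. (v, v) \<notin> E)"

definition out_degree :: "('a \<times> 'a) set \<Rightarrow> 'a \<Rightarrow> nat" where
  "out_degree E v = card {w. (v, w) \<in> E}"

definition min_out_degree :: "'a set \<Rightarrow> ('a \<times> 'a) set \<Rightarrow> nat" where
  "min_out_degree V E = Min (out_degree E ` V)"

definition contains_subgraph ::
  "'a set \<Rightarrow> ('a \<times> 'a) set \<Rightarrow> 'b set \<Rightarrow> ('b \<times> 'b) set \<Rightarrow> bool" where
  "contains_subgraph V E VH EH \<longleftrightarrow>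
     (\<exists>\<phi>. inj_on \<phi> VH \<and> \<phi> ` VH \<subseteq> V \<and> (\<forall>(a, b) \<in> EH. (\<phi> a, \<phi> b) \<in> E))"

text \<open>The in-star S^-_{k,h}: centre Inl (), and for each i < h a directed path
Inr (i,0) -> Inr (i,1) -> ... -> Inr (i,k-1) -> centre of length k.\<close>

definition in_star_V :: "nat \<Rightarrow> nat \<Rightarrow> (unit + nat \<times> nat) set" where
  "in_star_V k h = {Inl ()} \<union> {Inr (i, j) | i j. i < h \<and> j < k}"

definition in_star_E :: "nat \<Rightarrow> nat \<Rightarrow> ((unit + nat \<times> nat) \<times> (unit + nat \<times> nat)) set" where
  "in_star_E k h =
     {(Inr (i, j), Inr (i, Suc j)) | i j. i < h \<and> Suc j < k}
   \<union> {(Inr (i, k - 1), Inl ()) | i. i < h}"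

text \<open>T(k,l): the complete l-ary out-tree B^+_{k,l} of depth k (vertices: words over
{0..<l} of length \<le> k, edges xs -> xs @ [i]), where each leaf xs (length k) is the
centre of its own copy of S^-_{k,l}, with path vertices Inr (xs, i, j).\<close>

definition T_V :: "nat \<Rightarrow> nat \<Rightarrow> (nat list + nat list \<times> nat \<times> nat) set" where
  "T_V k l = {Inl xs | xs. length xs \<le> k \<and> set xs \<subseteq> {0..<l}}
     \<union> {Inr (xs, i, j) | xs i j. length xs = k \<and> set xs \<subseteq> {0..<l} \<and> i < l \<and> j < k}"

definition T_E :: "nat \<Rightarrow> nat \<Rightarrow>
    ((nat list + nat list \<times> nat \<times> nat) \<times> (nat list + nat list \<times> nat \<times> nat)) set" where
  "T_E k l =
     {(Inl xs, Inl (xs @ [i])) | xs i. length xs < k \<and> set xs \<subseteq> {0..<l} \<and> i < l}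
   \<union> {(Inr (xs, i, j), Inr (xs, i, Suc j)) | xs i j.
         length xs = k \<and> set xs \<subseteq> {0..<l} \<and> i < l \<and> Suc j < k}
   \<union> {(Inr (xs, i, k - 1), Inl xs) | xs i. length xs = k \<and> set xs \<subseteq> {0..<l} \<and> i < l}"

end

theory Submission
  imports Defs "HOL-Library.Disjoint_Sets"
begin

text \<open>Put H = 3 k l^(k+1) and let C be the set of centres of copies of S^-_{k,H}. By the
hypothesis on f, every nonempty vertex set S in which each vertex has at least f(k,H)
out-neighbours inside S meets C. Let A_0 = C and let A_(j+1) consist of the vertices with at
least m = 2 l^k out-neighbours in A_j. If A_k were empty, a vertex in none of A_(t+1), ...,
A_(k-1) would have fewer than m out-neighbours in each of A_t, ..., A_(k-1). For t = 0 this
makes the vertices outside A_0, ..., A_(k-1) such a set S, which cannot meet C = A_0, so these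
levels cover all vertices; as every out-degree exceeds k m, inductively A_(t+1), ..., A_(k-1)
cover them too, which is absurd for t = k - 1.

Since m exceeds the number of vertices of B^+_{k,l}, a copy of it rooted in A_k with all leaves
in C is grown greedily level by level. Each leaf is the centre of an in-star with H legs of k
vertices, and a vertex lies on at most one leg of a star; as H exceeds the size of the tree
plus k times the l^(k+1) legs needed, l legs per leaf are chosen greedily, disjoint from the
tree and from each other.\<close>

section \<open>Greedy choice of disjoint sets\<close>

lemma card_UN_le_mult:
  assumes "finite I" "\<And>i. i \<in> I \<Longrightarrow> card (A i) \<le> m"
  shows "card (\<Union>i\<in>I. A i) \<le> card I * m"
proof -
  have "card (\<Union>i\<in>I. A i) \<le> (\<Sum>i\<in>I. card (A i))"
    using assms(1) by (rule card_UN_le)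
  also have "\<dots> \<le> (\<Sum>i\<in>I. m)"
    using assms(2) by (rule sum_mono)
  finally show ?thesis
    by simp
qed

lemma card_meeting_disjoint_family_le:
  assumes "disjoint_family_on S I" "finite F"
  shows "card {i \<in> I. S i \<inter> F \<noteq> {}} \<le> card F"
proof -
  define w where "w i = (SOME x. x \<in> S i \<inter> F)" for i
  have w: "w i \<in> S i \<inter> F" if "i \<in> {i \<in> I. S i \<inter> F \<noteq> {}}" for i
    unfolding w_def by (rule some_in_eq[THEN iffD2]) (use that in blast)
  have "inj_on w {i \<in> I. S i \<inter> F \<noteq> {}}"
  proof (rule inj_onI, rule ccontr)
    fix i j
    assume i: "i \<in> {i \<in> I. S i \<inter> F \<noteq> {}}" and j: "j \<in> {i \<in> I. S i \<inter> F \<noteq> {}}"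
      and "w i = w j" "i \<noteq> j"
    then have "w i \<in> S i \<inter> S j"
      using w[OF i] w[OF j] by simp
    moreover have "S i \<inter> S j = {}"
      using disjoint_family_onD[OF assms(1)] i j \<open>i \<noteq> j\<close> by simp
    ultimately show False
      by simp
  qed
  moreover have "w ` {i \<in> I. S i \<inter> F \<noteq> {}} \<subseteq> F"
    using w by (simp add: image_subset_iff)
  ultimately show ?thesis
    using assms(2) by (rule card_inj_on_le)
qed

lemma disjoint_family_on_avoiding:
  assumes "disjoint_family_on S I" "finite F" "card F < card I"
  obtains i where "i \<in> I" "S i \<inter> F = {}"
proof -
  have "card {i \<in> I. S i \<inter> F \<noteq> {}} < card I"
    using card_meeting_disjoint_family_le[OF assms(1,2)] assms(3) by linarith
  then have "{i \<in> I. S i \<inter> F \<noteq> {}} \<noteq> I"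
    by auto
  then show ?thesis
    using that by blast
qed

lemma disjoint_choice:
  assumes "finite L" "finite F"
    and room: "\<And>x. x \<in> L \<Longrightarrow> card F + card L * s < card (Opt x)"
    and small: "\<And>x c. x \<in> L \<Longrightarrow> c \<in> Opt x \<Longrightarrow> finite (S x c) \<and> card (S x c) \<le> s"
    and disj: "\<And>x. x \<in> L \<Longrightarrow> disjoint_family_on (S x) (Opt x)"
  shows "\<exists>g. (\<forall>x\<in>L. g x \<in> Opt x \<and> S x (g x) \<inter> F = {}) \<and> disjoint_family_on (\<lambda>x. S x (g x)) L"
  using assms(1) room small disj
proof (induction L rule: finite_induct)
  case empty
  then show ?case
    by (simp add: disjoint_family_on_def)
next
  case (insert x L)
  have "card F + card L * s \<le> card F + card (insert x L) * s"
    using insert.hyps by simp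
  then have room_L: "card F + card L * s < card (Opt y)" if "y \<in> L" for y
    using insert.prems(1)[OF insertI2[OF that]] by linarith
  have small_L: "finite (S y c) \<and> card (S y c) \<le> s" if "y \<in> L" "c \<in> Opt y" for y c
    using insert.prems(2) that by simp
  have disj_L: "disjoint_family_on (S y) (Opt y)" if "y \<in> L" for y
    using insert.prems(3) that by simp
  obtain g where g: "\<forall>y\<in>L. g y \<in> Opt y \<and> S y (g y) \<inter> F = {}"
    and g_disj: "disjoint_family_on (\<lambda>y. S y (g y)) L"
    using insert.IH[OF room_L small_L disj_L] by blast
  define F' where "F' = F \<union> (\<Union>y\<in>L. S y (g y))"
  have "card (\<Union>y\<in>L. S y (g y)) \<le> card L * s"
    using insert.hyps(1) small_L g by (intro card_UN_le_mult) auto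
  then have "card F' \<le> card F + card L * s"
    unfolding F'_def using card_Un_le[of F "\<Union>y\<in>L. S y (g y)"] by linarith
  then have "card F' < card (Opt x)"
    using insert.prems(1)[OF insertI1] \<open>card F + card L * s \<le> card F + card (insert x L) * s\<close>
    by linarith
  moreover have "finite F'"
    unfolding F'_def using insert.hyps(1) \<open>finite F\<close> small_L g by simp
  ultimately obtain c where c: "c \<in> Opt x" "S x c \<inter> F' = {}"
    using disjoint_family_on_avoiding[OF insert.prems(3)[OF insertI1]] by blast
  define g' where "g' = g(x := c)"
  have g'_x: "g' x = c" and g'_L: "\<And>y. y \<in> L \<Longrightarrow> g' y = g y"
    using insert.hyps(2) unfolding g'_def by auto
  have "S x (g' x) \<inter> (\<Union>y\<in>L. S y (g' y)) = {}"
    using c(2) unfolding F'_def by (auto simp: g'_x g'_L)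
  moreover have "disjoint_family_on (\<lambda>y. S y (g' y)) L"
    using g_disj by (simp add: disjoint_family_on_def g'_L)
  ultimately have "disjoint_family_on (\<lambda>y. S y (g' y)) (insert x L)"
    using insert.hyps(2) by (simp add: disjoint_family_on_insert)
  moreover have "\<forall>y\<in>insert x L. g' y \<in> Opt y \<and> S y (g' y) \<inter> F = {}"
    using g c unfolding F'_def by (auto simp: g'_x g'_L)
  ultimately show ?case
    by blast
qed

lemma distinct_choice:
  assumes "finite L" "finite F" "\<And>x. x \<in> L \<Longrightarrow> card F + card L < card (Opt x)"
  shows "\<exists>g. inj_on g L \<and> (\<forall>x\<in>L. g x \<in> Opt x - F)"
proof -
  have "\<exists>g. (\<forall>x\<in>L. g x \<in> Opt x \<and> {g x} \<inter> F = {}) \<and> disjoint_family_on (\<lambda>x. {g x}) L"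
    using assms by (intro disjoint_choice[where s = 1]) (simp_all add: disjoint_family_on_def)
  then obtain g where "\<forall>x\<in>L. g x \<in> Opt x \<and> g x \<notin> F" "disjoint_family_on (\<lambda>x. {g x}) L"
    by auto
  moreover from this(2) have "inj_on g L"
    unfolding disjoint_family_on_def inj_on_def by auto
  ultimately show ?thesis
    by blast
qed

section \<open>Subgraph embeddings and centres of in-stars\<close>

definition subgraph_embedding ::
  "'a set \<Rightarrow> ('a \<times> 'a) set \<Rightarrow> 'b set \<Rightarrow> ('b \<times> 'b) set \<Rightarrow> ('b \<Rightarrow> 'a) \<Rightarrow> bool" where
  "subgraph_embedding V E VH EH \<phi> \<longleftrightarrow>
     inj_on \<phi> VH \<and> \<phi> ` VH \<subseteq> V \<and> (\<forall>(a, b) \<in> EH. (\<phi> a, \<phi> b) \<in> E)"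

lemma contains_subgraph_iff_embedding:
  "contains_subgraph V E VH EH \<longleftrightarrow> (\<exists>\<phi>. subgraph_embedding V E VH EH \<phi>)"
  by (simp add: contains_subgraph_def subgraph_embedding_def)

lemma subgraph_embedding_mono:
  "subgraph_embedding V' E' VH EH \<phi> \<Longrightarrow> V' \<subseteq> V \<Longrightarrow> E' \<subseteq> E \<Longrightarrow> subgraph_embedding V E VH EH \<phi>"
  unfolding subgraph_embedding_def by blast

lemma out_degree_eq_card_Image: "out_degree E v = card (E `` {v})"
  by (simp add: out_degree_def Image_singleton)

lemma min_out_degree_le: "finite V \<Longrightarrow> v \<in> V \<Longrightarrow> min_out_degree V E \<le> card (E `` {v})"
  unfolding min_out_degree_def by (simp add: out_degree_eq_card_Image)

lemma min_out_degree_induced_ge: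
  assumes "finite S" "S \<noteq> {}" "\<And>v. v \<in> S \<Longrightarrow> d \<le> card (E `` {v} \<inter> S)"
  shows "d \<le> min_out_degree S (E \<inter> S \<times> S)"
proof -
  have "(E \<inter> S \<times> S) `` {v} = E `` {v} \<inter> S" if "v \<in> S" for v
    using that by auto
  then show ?thesis
    using assms by (simp add: min_out_degree_def out_degree_eq_card_Image)
qed

lemma is_digraph_induced: "is_digraph V E \<Longrightarrow> S \<subseteq> V \<Longrightarrow> S \<noteq> {} \<Longrightarrow> is_digraph S (E \<inter> S \<times> S)"
  unfolding is_digraph_def by (auto intro: finite_subset)

lemma in_star_forcing_degree_pos:
  fixes d :: nat
  assumes star: "\<And>(S :: 'a set) F. is_digraph S F \<Longrightarrow> d \<le> min_out_degree S F \<Longrightarrow>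
                   contains_subgraph S F (in_star_V k h) (in_star_E k h)"
    and "k \<ge> 1" "h \<ge> 1"
  shows "d \<ge> 1"
proof (rule ccontr)
  fix x :: 'a
  assume "\<not> d \<ge> 1"
  have "is_digraph {x} {}"
    by (simp add: is_digraph_def)
  moreover from \<open>\<not> d \<ge> 1\<close> have "d \<le> min_out_degree {x} {}"
    by simp
  ultimately have "contains_subgraph {x} {} (in_star_V k h) (in_star_E k h)"
    by (rule star)
  then obtain \<sigma> :: "_ \<Rightarrow> 'a" where inj: "inj_on \<sigma> (in_star_V k h)"
    and into: "\<sigma> ` in_star_V k h \<subseteq> {x}"
    unfolding contains_subgraph_def by blast
  have mem: "Inl () \<in> in_star_V k h" "Inr (0, 0) \<in> in_star_V k h"
    using assms(2,3) by (auto simp: in_star_V_def)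
  with into have "\<sigma> (Inl ()) = \<sigma> (Inr (0, 0))"
    by auto
  from inj_onD[OF inj this mem] show False
    by simp
qed

definition star_centres :: "nat \<Rightarrow> nat \<Rightarrow> 'a set \<Rightarrow> ('a \<times> 'a) set \<Rightarrow> 'a set" where
  "star_centres k h V E =
     {\<sigma> (Inl ()) | \<sigma>. subgraph_embedding V E (in_star_V k h) (in_star_E k h) \<sigma>}"

lemma mem_star_centres:
  "c \<in> star_centres k h V E \<longleftrightarrow>
     (\<exists>\<sigma>. subgraph_embedding V E (in_star_V k h) (in_star_E k h) \<sigma> \<and> \<sigma> (Inl ()) = c)"
  unfolding star_centres_def by blast

lemma star_centres_subset: "star_centres k h V E \<subseteq> V"
  by (auto simp: star_centres_def subgraph_embedding_def in_star_V_def)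

lemma dense_subset_meets_star_centres:
  fixes d :: nat and V :: "'a set"
  assumes star: "\<And>(S :: 'a set) F. is_digraph S F \<Longrightarrow> d \<le> min_out_degree S F \<Longrightarrow>
                   contains_subgraph S F (in_star_V k h) (in_star_E k h)"
    and G: "is_digraph V E" and S: "S \<subseteq> V" "S \<noteq> {}"
    and dense: "\<forall>v\<in>S. d \<le> card (E `` {v} \<inter> S)"
  shows "S \<inter> star_centres k h V E \<noteq> {}"
proof -
  have "finite S"
    using G S(1) finite_subset unfolding is_digraph_def by blast
  then have "d \<le> min_out_degree S (E \<inter> S \<times> S)"
    using S(2) dense by (intro min_out_degree_induced_ge) auto
  then obtain \<sigma> where \<sigma>: "subgraph_embedding S (E \<inter> S \<times> S) (in_star_V k h) (in_star_E k h) \<sigma>"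
    using star[OF is_digraph_induced[OF G S]] by (auto simp: contains_subgraph_iff_embedding)
  then have "\<sigma> (Inl ()) \<in> star_centres k h V E"
    unfolding star_centres_def using subgraph_embedding_mono[OF \<sigma> S(1)] by blast
  moreover have "\<sigma> (Inl ()) \<in> S"
    using \<sigma> by (auto simp: subgraph_embedding_def in_star_V_def)
  ultimately show ?thesis
    by blast
qed

section \<open>Levels of vertices rich in out-neighbours\<close>

fun level :: "'a set \<Rightarrow> ('a \<times> 'a) set \<Rightarrow> nat \<Rightarrow> 'a set \<Rightarrow> nat \<Rightarrow> 'a set" where
  "level V E m C 0 = C"
| "level V E m C (Suc j) = {v \<in> V. m \<le> card (E `` {v} \<inter> level V E m C j)}"

lemma level_subset: "C \<subseteq> V \<Longrightarrow> level V E m C j \<subseteq> V"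
  by (cases j) auto

lemma card_out_nbrs_Int_levels_le:
  assumes "v \<in> V" "level V E m C k = {}" "v \<notin> (\<Union>i\<in>{Suc t..<k}. level V E m C i)"
  shows "card (E `` {v} \<inter> (\<Union>i\<in>{t..<k}. level V E m C i)) \<le> (k - t) * m"
proof -
  have "v \<notin> level V E m C (Suc i)" if "i \<in> {t..<k}" for i
  proof (cases "Suc i = k")
    case True
    then show ?thesis
      using assms(2) by simp
  next
    case False
    then have "Suc i \<in> {Suc t..<k}"
      using that by auto
    then show ?thesis
      using assms(3) by blast
  qed
  then have "card (E `` {v} \<inter> level V E m C i) \<le> m" if "i \<in> {t..<k}" for i
    using that \<open>v \<in> V\<close> by fastforce
  then have "card (\<Union>i\<in>{t..<k}. E `` {v} \<inter> level V E m C i) \<le> (k - t) * m"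
    using card_UN_le_mult[of "{t..<k}" "\<lambda>i. E `` {v} \<inter> level V E m C i"] by simp
  moreover have "E `` {v} \<inter> (\<Union>i\<in>{t..<k}. level V E m C i) = (\<Union>i\<in>{t..<k}. E `` {v} \<inter> level V E m C i)"
    by blast
  ultimately show ?thesis
    by (simp only:)
qed

lemma levels_below_cover_if_top_empty:
  assumes E: "E \<subseteq> V \<times> V" and top_empty: "level V E m C k = {}"
    and deg: "\<And>v. v \<in> V \<Longrightarrow> d + k * m \<le> card (E `` {v})"
    and dense: "\<And>S. S \<subseteq> V \<Longrightarrow> S \<noteq> {} \<Longrightarrow> \<forall>v\<in>S. d \<le> card (E `` {v} \<inter> S) \<Longrightarrow> S \<inter> C \<noteq> {}"
  shows "V \<subseteq> (\<Union>i\<in>{0..<k}. level V E m C i)"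
proof (rule ccontr)
  let ?U = "\<Union>i\<in>{0..<k}. level V E m C i"
  assume "\<not> V \<subseteq> ?U"
  moreover have "d \<le> card (E `` {v} \<inter> (V - ?U))" if "v \<in> V - ?U" for v
  proof -
    have "E `` {v} = (E `` {v} \<inter> (V - ?U)) \<union> (E `` {v} \<inter> ?U)"
      using E by blast
    then have "card (E `` {v}) \<le> card (E `` {v} \<inter> (V - ?U)) + card (E `` {v} \<inter> ?U)"
      by (metis card_Un_le)
    moreover have "card (E `` {v} \<inter> ?U) \<le> k * m"
      using card_out_nbrs_Int_levels_le[of v V E m C k 0] that top_empty by auto
    moreover have "d + k * m \<le> card (E `` {v})"
      using deg that by blast
    ultimately show ?thesis
      by linarith
  qed
  ultimately obtain c where "c \<in> V - ?U" "c \<in> C"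
    using dense[of "V - ?U"] by blast
  moreover have "C \<subseteq> ?U"
    using top_empty by (cases k) auto
  ultimately show False
    by blast
qed

lemma level_top_nonempty:
  assumes "V \<noteq> {}" and E: "E \<subseteq> V \<times> V" and "d \<ge> 1"
    and deg: "\<And>v. v \<in> V \<Longrightarrow> d + k * m \<le> card (E `` {v})"
    and dense: "\<And>S. S \<subseteq> V \<Longrightarrow> S \<noteq> {} \<Longrightarrow> \<forall>v\<in>S. d \<le> card (E `` {v} \<inter> S) \<Longrightarrow> S \<inter> C \<noteq> {}"
  shows "level V E m C k \<noteq> {}"
proof
  assume top_empty: "level V E m C k = {}"
  define U where "U t = (\<Union>i\<in>{t..<k}. level V E m C i)" for t
  have "V \<subseteq> U t" if "t \<le> k" for t
    using that
  proof (induction t)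
    case 0
    show ?case
      unfolding U_def by (rule levels_below_cover_if_top_empty[OF E top_empty deg dense])
  next
    case (Suc t)
    show ?case
    proof
      fix v
      assume "v \<in> V"
      show "v \<in> U (Suc t)"
      proof (rule ccontr)
        assume "v \<notin> U (Suc t)"
        have "E `` {v} \<subseteq> U t"
          using Suc E by auto
        then have "card (E `` {v}) = card (E `` {v} \<inter> U t)"
          by (simp add: Int_absorb2)
        also have "\<dots> \<le> (k - t) * m"
          using card_out_nbrs_Int_levels_le[OF \<open>v \<in> V\<close> top_empty \<open>v \<notin> U (Suc t)\<close>[unfolded U_def]]
          unfolding U_def .
        finally have "card (E `` {v}) \<le> (k - t) * m" .
        moreover have "(k - t) * m \<le> k * m"
          by simp
        ultimately show False
          using deg[OF \<open>v \<in> V\<close>] \<open>d \<ge> 1\<close> by linarith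
      qed
    qed
  qed
  from this[of k] show False
    using \<open>V \<noteq> {}\<close> by (simp add: U_def)
qed

section \<open>Complete out-trees\<close>

definition out_tree_V :: "nat \<Rightarrow> nat \<Rightarrow> nat list set" where
  "out_tree_V k l = {xs. set xs \<subseteq> {0..<l} \<and> length xs \<le> k}"

definition out_tree_E :: "nat \<Rightarrow> nat \<Rightarrow> (nat list \<times> nat list) set" where
  "out_tree_E k l = {(xs, xs @ [i]) | xs i. length xs < k \<and> set xs \<subseteq> {0..<l} \<and> i < l}"

definition out_tree_leaves :: "nat \<Rightarrow> nat \<Rightarrow> nat list set" where
  "out_tree_leaves k l = {xs. set xs \<subseteq> {0..<l} \<and> length xs = k}"

lemma finite_out_tree_V: "finite (out_tree_V k l)"
  unfolding out_tree_V_def by (rule finite_lists_length_le) simp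

lemma finite_out_tree_leaves: "finite (out_tree_leaves k l)"
  unfolding out_tree_leaves_def by (rule finite_lists_length_eq) simp

lemma card_out_tree_V: "card (out_tree_V k l) = (\<Sum>i\<le>k. l ^ i)"
  unfolding out_tree_V_def by (simp add: card_lists_length_le)

lemma card_out_tree_leaves: "card (out_tree_leaves k l) = l ^ k"
  unfolding out_tree_leaves_def by (simp add: card_lists_length_eq)

lemma card_out_tree_V_less:
  assumes "l \<ge> 2"
  shows "card (out_tree_V k l) < 2 * l ^ k"
proof (induction k)
  case 0
  then show ?case
    by (simp add: card_out_tree_V)
next
  case (Suc k)
  have "card (out_tree_V (Suc k) l) = card (out_tree_V k l) + l ^ Suc k"
    by (simp add: card_out_tree_V)
  also have "\<dots> < 2 * l ^ k + l * l ^ k"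
    using Suc.IH by simp
  also have "\<dots> \<le> 2 * l ^ Suc k"
    using assms by simp
  finally show ?case .
qed

lemma card_out_tree_V_plus_legs_less:
  assumes "l \<ge> 2" "k \<ge> 1"
  shows "card (out_tree_V k l) + l ^ Suc k * k < 3 * k * l ^ (k + 1)"
proof -
  have "card (out_tree_V k l) < 2 * l ^ k"
    using assms(1) by (rule card_out_tree_V_less)
  also have "\<dots> \<le> l ^ Suc k"
    using assms(1) by simp
  also have "\<dots> \<le> l ^ Suc k * k"
    using assms(2) by simp
  finally have "card (out_tree_V k l) < l ^ Suc k * k" .
  moreover have "3 * k * l ^ (k + 1) = 3 * (l ^ Suc k * k)"
    by simp
  ultimately show ?thesis
    by linarith
qed

lemma out_tree_V_Suc: "out_tree_V (Suc k) l = out_tree_V k l \<union> out_tree_leaves (Suc k) l"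
  by (auto simp: out_tree_V_def out_tree_leaves_def)

lemma out_tree_E_Suc:
  "out_tree_E (Suc k) l = out_tree_E k l \<union> {(xs, xs @ [i]) | xs i. xs \<in> out_tree_leaves k l \<and> i < l}"
  by (auto simp: out_tree_E_def out_tree_leaves_def)

lemma out_tree_E_subset: "out_tree_E k l \<subseteq> out_tree_V k l \<times> out_tree_V k l"
  by (auto simp: out_tree_E_def out_tree_V_def)

lemma out_tree_leaves_subset: "out_tree_leaves k l \<subseteq> out_tree_V k l"
  by (auto simp: out_tree_V_def out_tree_leaves_def)

lemma butlast_in_out_tree_leaves:
  "xs \<in> out_tree_leaves (Suc k) l \<Longrightarrow> butlast xs \<in> out_tree_leaves k l"
  by (auto simp: out_tree_leaves_def dest: in_set_butlastD)

lemma out_tree_V_Int_leaves_Suc: "out_tree_V k l \<inter> out_tree_leaves (Suc k) l = {}"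
  by (auto simp: out_tree_V_def out_tree_leaves_def)

lemma out_tree_embedding_extend:
  assumes E: "E \<subseteq> V \<times> V" and \<psi>: "subgraph_embedding V E (out_tree_V j l) (out_tree_E j l) \<psi>"
    and rich: "\<And>xs. xs \<in> out_tree_leaves j l \<Longrightarrow> card (out_tree_V (Suc j) l) < card (E `` {\<psi> xs} \<inter> A)"
  shows "\<exists>\<psi>'. subgraph_embedding V E (out_tree_V (Suc j) l) (out_tree_E (Suc j) l) \<psi>'
              \<and> \<psi>' ` out_tree_leaves (Suc j) l \<subseteq> A"
proof -
  let ?W = "out_tree_V j l" and ?L = "out_tree_leaves (Suc j) l"
  define Opt where "Opt ys = E `` {\<psi> (butlast ys)} \<inter> A" for ys
  have "card (\<psi> ` ?W) + card ?L \<le> card (out_tree_V (Suc j) l)"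
    using card_image_le[OF finite_out_tree_V, of \<psi> j l]
    by (simp add: card_out_tree_V card_out_tree_leaves)
  then have "card (\<psi> ` ?W) + card ?L < card (Opt ys)" if "ys \<in> ?L" for ys
    using rich[OF butlast_in_out_tree_leaves[OF that]] unfolding Opt_def by linarith
  then obtain g where g_inj: "inj_on g ?L" and g: "\<forall>ys\<in>?L. g ys \<in> Opt ys - \<psi> ` ?W"
    using distinct_choice[OF finite_out_tree_leaves finite_imageI[OF finite_out_tree_V]] by metis
  define \<psi>' where "\<psi>' = (\<lambda>ys. if ys \<in> ?W then \<psi> ys else g ys)"
  have "\<psi> ` ?W \<inter> g ` ?L = {}"
    using g by (auto simp: disjoint_iff) (metis DiffD2 image_eqI)
  then have "inj_on \<psi>' (out_tree_V (Suc j) l)"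
    unfolding \<psi>'_def out_tree_V_Suc using \<psi> g_inj
    by (intro inj_on_disjoint_Un) (simp_all add: subgraph_embedding_def)
  moreover have "\<psi>' ` out_tree_V (Suc j) l \<subseteq> V"
    using \<psi> g E unfolding \<psi>'_def out_tree_V_Suc Opt_def subgraph_embedding_def by auto
  moreover have "(\<psi>' a, \<psi>' b) \<in> E" if "(a, b) \<in> out_tree_E (Suc j) l" for a b
    using that unfolding out_tree_E_Suc
  proof
    assume "(a, b) \<in> out_tree_E j l"
    then show ?thesis
      using \<psi> out_tree_E_subset unfolding \<psi>'_def subgraph_embedding_def by fastforce
  next
    assume "(a, b) \<in> {(xs, xs @ [i]) | xs i. xs \<in> out_tree_leaves j l \<and> i < l}"
    then obtain i where a: "a \<in> out_tree_leaves j l" and "i < l" and b: "b = a @ [i]"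
      by blast
    then have "b \<in> ?L"
      by (auto simp: out_tree_leaves_def)
    then show ?thesis
      using g a b out_tree_leaves_subset out_tree_V_Int_leaves_Suc
      unfolding \<psi>'_def Opt_def by fastforce
  qed
  moreover have "\<psi>' ` ?L \<subseteq> A"
    using g out_tree_V_Int_leaves_Suc unfolding \<psi>'_def Opt_def by fastforce
  ultimately show ?thesis
    unfolding subgraph_embedding_def by blast
qed

lemma out_tree_embedding_from_level:
  assumes E: "E \<subseteq> V \<times> V" and C: "C \<subseteq> V"
    and r: "r \<in> level V E m C (n + j)"
    and small: "card (out_tree_V j l) < m"
  shows "\<exists>\<psi>. subgraph_embedding V E (out_tree_V j l) (out_tree_E j l) \<psi>
             \<and> \<psi> ` out_tree_leaves j l \<subseteq> level V E m C n"
  using r small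
proof (induction j arbitrary: n)
  case 0
  have "out_tree_V 0 l = {[]}" "out_tree_E 0 l = {}" "out_tree_leaves 0 l = {[]}"
    by (auto simp: out_tree_V_def out_tree_E_def out_tree_leaves_def)
  moreover have "r \<in> V"
    using "0.prems"(1) level_subset[OF C] by auto
  ultimately show ?case
    using "0.prems"(1) by (intro exI[of _ "\<lambda>_. r"]) (simp add: subgraph_embedding_def)
next
  case (Suc j)
  have "card (out_tree_V j l) \<le> card (out_tree_V (Suc j) l)"
    by (simp add: card_out_tree_V)
  then obtain \<psi> where \<psi>: "subgraph_embedding V E (out_tree_V j l) (out_tree_E j l) \<psi>"
    and \<psi>_leaves: "\<psi> ` out_tree_leaves j l \<subseteq> level V E m C (Suc n)"
    using Suc.IH[of "Suc n"] Suc.prems by auto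
  have "card (out_tree_V (Suc j) l) < card (E `` {\<psi> xs} \<inter> level V E m C n)"
    if "xs \<in> out_tree_leaves j l" for xs
    using \<psi>_leaves that Suc.prems(2) by fastforce
  then show ?case
    by (rule out_tree_embedding_extend[OF E \<psi>])
qed

lemma out_tree_with_leaves_at_star_centres:
  fixes d :: nat and V :: "'a set"
  assumes star: "\<And>(S :: 'a set) F. is_digraph S F \<Longrightarrow> d \<le> min_out_degree S F \<Longrightarrow>
                   contains_subgraph S F (in_star_V k h) (in_star_E k h)"
    and "k \<ge> 1" "h \<ge> 1" and G: "is_digraph V E" and deg: "d + k * m \<le> min_out_degree V E"
    and small: "card (out_tree_V k l) < m"
  shows "\<exists>\<psi>. subgraph_embedding V E (out_tree_V k l) (out_tree_E k l) \<psi>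
             \<and> \<psi> ` out_tree_leaves k l \<subseteq> star_centres k h V E"
proof -
  have "d \<ge> 1"
    using star \<open>k \<ge> 1\<close> \<open>h \<ge> 1\<close> by (rule in_star_forcing_degree_pos)
  have "finite V" "V \<noteq> {}" and E: "E \<subseteq> V \<times> V"
    using G by (auto simp: is_digraph_def)
  have deg_v: "d + k * m \<le> card (E `` {v})" if "v \<in> V" for v
    using min_out_degree_le[OF \<open>finite V\<close> that, of E] deg by linarith
  have dense: "S \<inter> star_centres k h V E \<noteq> {}"
    if "S \<subseteq> V" "S \<noteq> {}" "\<forall>v\<in>S. d \<le> card (E `` {v} \<inter> S)" for S
    using star G that by (rule dense_subset_meets_star_centres)
  have "level V E m (star_centres k h V E) k \<noteq> {}"
    by (rule level_top_nonempty[OF \<open>V \<noteq> {}\<close> E \<open>d \<ge> 1\<close> deg_v dense])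
  then obtain r where "r \<in> level V E m (star_centres k h V E) k"
    by blast
  then have "r \<in> level V E m (star_centres k h V E) (0 + k)"
    by (simp only: add_0)
  from out_tree_embedding_from_level[OF E star_centres_subset this small]
  show ?thesis
    by simp
qed

section \<open>Attaching in-star legs to the leaves\<close>

lemma inj_on_case_sumI:
  assumes "inj_on f A" "inj_on g B" "f ` A \<inter> g ` B = {}"
  shows "inj_on (case_sum f g) (Inl ` A \<union> Inr ` B)"
proof (rule inj_onI)
  fix x y
  assume "x \<in> Inl ` A \<union> Inr ` B" "y \<in> Inl ` A \<union> Inr ` B" "case_sum f g x = case_sum f g y"
  then show "x = y"
    using assms by (elim UnE imageE) (auto dest: inj_onD)
qed

definition star_leg :: "nat \<Rightarrow> (unit + nat \<times> nat \<Rightarrow> 'a) \<Rightarrow> nat \<Rightarrow> 'a set" where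
  "star_leg k \<sigma> q = (\<lambda>j. \<sigma> (Inr (q, j))) ` {0..<k}"

lemma disjoint_family_on_star_leg:
  assumes "inj_on \<sigma> (in_star_V k h)"
  shows "disjoint_family_on (star_leg k \<sigma>) {0..<h}"
  unfolding disjoint_family_on_def
proof (intro ballI impI)
  fix p q
  assume "p \<in> {0..<h}" "q \<in> {0..<h}" "p \<noteq> q"
  then show "star_leg k \<sigma> p \<inter> star_leg k \<sigma> q = {}"
    using inj_onD[OF assms] by (fastforce simp: star_leg_def in_star_V_def)
qed

lemma T_E_cases:
  assumes "(a, b) \<in> T_E k l"
  obtains (tree) xs i where "a = Inl xs" "b = Inl (xs @ [i])" "(xs, xs @ [i]) \<in> out_tree_E k l"
    | (leg) xs i j where "a = Inr (xs, i, j)" "b = Inr (xs, i, Suc j)"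
        "(xs, i) \<in> out_tree_leaves k l \<times> {0..<l}" "Suc j < k"
    | (foot) xs i where "a = Inr (xs, i, k - 1)" "b = Inl xs" "(xs, i) \<in> out_tree_leaves k l \<times> {0..<l}"
  using assms unfolding T_E_def
proof (elim UnE CollectE exE conjE)
  fix xs i
  assume "(a, b) = (Inl xs, Inl (xs @ [i]))" "length xs < k" "set xs \<subseteq> {0..<l}" "i < l"
  then show thesis
    using tree by (simp add: out_tree_E_def)
next
  fix xs i j
  assume "(a, b) = (Inr (xs, i, j), Inr (xs, i, Suc j))" "length xs = k" "set xs \<subseteq> {0..<l}" "i < l" "Suc j < k"
  then show thesis
    using leg by (simp add: out_tree_leaves_def)
next
  fix xs i
  assume "(a, b) = (Inr (xs, i, k - 1), Inl xs)" "length xs = k" "set xs \<subseteq> {0..<l}" "i < l"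
  then show thesis
    using foot by (simp add: out_tree_leaves_def)
qed

lemma T_V_eq:
  "T_V k l = Inl ` out_tree_V k l \<union> Inr ` {(xs, i, j). (xs, i) \<in> out_tree_leaves k l \<times> {0..<l} \<and> j < k}"
  by (auto simp: T_V_def out_tree_V_def out_tree_leaves_def)

lemma inj_on_star_legs:
  assumes inj: "\<And>x. x \<in> X \<Longrightarrow> inj_on (\<sigma> (fst x)) (in_star_V k h)"
    and p: "\<And>x. x \<in> X \<Longrightarrow> p x < h"
    and disj: "disjoint_family_on (\<lambda>x. star_leg k (\<sigma> (fst x)) (p x)) X"
  shows "inj_on (\<lambda>(xs, i, j). \<sigma> xs (Inr (p (xs, i), j))) {(xs, i, j). (xs, i) \<in> X \<and> j < k}"
proof (rule inj_onI)
  fix a b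
  assume a: "a \<in> {(xs, i, j). (xs, i) \<in> X \<and> j < k}" and b: "b \<in> {(xs, i, j). (xs, i) \<in> X \<and> j < k}"
    and eq: "(\<lambda>(xs, i, j). \<sigma> xs (Inr (p (xs, i), j))) a = (\<lambda>(xs, i, j). \<sigma> xs (Inr (p (xs, i), j))) b"
  obtain xs i j ys i' j' where ab: "a = (xs, i, j)" "b = (ys, i', j')"
    by (cases a, cases b) auto
  have X: "(xs, i) \<in> X" "(ys, i') \<in> X" and "j < k" "j' < k"
    using a b unfolding ab by auto
  show "a = b"
  proof (cases "(xs, i) = (ys, i')")
    case True
    have "\<sigma> xs (Inr (p (xs, i), j)) = \<sigma> xs (Inr (p (xs, i), j'))"
      using eq True unfolding ab by simp
    moreover have "Inr (p (xs, i), j) \<in> in_star_V k h" "Inr (p (xs, i), j') \<in> in_star_V k h"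
      using p[OF X(1)] \<open>j < k\<close> \<open>j' < k\<close> by (auto simp: in_star_V_def)
    ultimately have "(Inr (p (xs, i), j) :: unit + nat \<times> nat) = Inr (p (xs, i), j')"
      by (rule inj_onD[OF inj[OF X(1), simplified]])
    then show ?thesis
      using True unfolding ab by simp
  next
    case False
    then have "star_leg k (\<sigma> xs) (p (xs, i)) \<inter> star_leg k (\<sigma> ys) (p (ys, i')) = {}"
      using disjoint_family_onD[OF disj X] by simp
    moreover have "\<sigma> xs (Inr (p (xs, i), j)) \<in> star_leg k (\<sigma> xs) (p (xs, i))"
      "\<sigma> ys (Inr (p (ys, i'), j')) \<in> star_leg k (\<sigma> ys) (p (ys, i'))"
      using \<open>j < k\<close> \<open>j' < k\<close> by (auto simp: star_leg_def)
    ultimately show ?thesis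
      using eq unfolding ab by auto
  qed
qed

lemma T_E_mapped:
  assumes \<psi>: "\<And>a b. (a, b) \<in> out_tree_E k l \<Longrightarrow> (\<psi> a, \<psi> b) \<in> E"
    and \<sigma>: "\<And>xs a b. xs \<in> out_tree_leaves k l \<Longrightarrow> (a, b) \<in> in_star_E k h \<Longrightarrow> (\<sigma> xs a, \<sigma> xs b) \<in> E"
    and centre: "\<And>xs. xs \<in> out_tree_leaves k l \<Longrightarrow> \<sigma> xs (Inl ()) = \<psi> xs"
    and p: "\<And>x. x \<in> out_tree_leaves k l \<times> {0..<l} \<Longrightarrow> p x < h"
    and ab: "(a, b) \<in> T_E k l"
  shows "(case_sum \<psi> (\<lambda>(xs, i, j). \<sigma> xs (Inr (p (xs, i), j))) a,
          case_sum \<psi> (\<lambda>(xs, i, j). \<sigma> xs (Inr (p (xs, i), j))) b) \<in> E"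
  using ab
proof (cases rule: T_E_cases)
  case (tree xs i)
  then show ?thesis
    using \<psi> by simp
next
  case (leg xs i j)
  then have "(Inr (p (xs, i), j), Inr (p (xs, i), Suc j)) \<in> in_star_E k h"
    using p by (auto simp: in_star_E_def)
  then show ?thesis
    using \<sigma> leg by auto
next
  case (foot xs i)
  then have "(Inr (p (xs, i), k - 1), Inl ()) \<in> in_star_E k h"
    using p by (auto simp: in_star_E_def)
  then show ?thesis
    using \<sigma> centre foot by fastforce
qed

lemma T_embedding_from_tree_and_legs:
  fixes \<psi> :: "nat list \<Rightarrow> 'a" and \<sigma> :: "nat list \<Rightarrow> unit + nat \<times> nat \<Rightarrow> 'a"
  assumes \<psi>: "subgraph_embedding V E (out_tree_V k l) (out_tree_E k l) \<psi>"
    and \<sigma>: "\<And>xs. xs \<in> out_tree_leaves k l \<Longrightarrow>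
               subgraph_embedding V E (in_star_V k h) (in_star_E k h) (\<sigma> xs) \<and> \<sigma> xs (Inl ()) = \<psi> xs"
    and p: "\<And>x. x \<in> out_tree_leaves k l \<times> {0..<l} \<Longrightarrow> p x < h"
    and avoid: "\<And>x. x \<in> out_tree_leaves k l \<times> {0..<l} \<Longrightarrow>
                  star_leg k (\<sigma> (fst x)) (p x) \<inter> \<psi> ` out_tree_V k l = {}"
    and disj: "disjoint_family_on (\<lambda>x. star_leg k (\<sigma> (fst x)) (p x)) (out_tree_leaves k l \<times> {0..<l})"
  shows "subgraph_embedding V E (T_V k l) (T_E k l)
           (case_sum \<psi> (\<lambda>(xs, i, j). \<sigma> xs (Inr (p (xs, i), j))))"
proof -
  define Q where "Q = {(xs, i, j). (xs, i) \<in> out_tree_leaves k l \<times> {0..<l} \<and> j < k}"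
  define \<pi> where "\<pi> = (\<lambda>(xs, i, j). \<sigma> xs (Inr (p (xs, i), j)))"
  have \<pi>_star: "\<pi> (xs, i, j) \<in> \<sigma> xs ` in_star_V k h \<inter> star_leg k (\<sigma> xs) (p (xs, i))"
    if "(xs, i, j) \<in> Q" for xs i j
    using that p by (auto simp: Q_def \<pi>_def star_leg_def in_star_V_def)
  have \<sigma>_inj: "inj_on (\<sigma> (fst x)) (in_star_V k h)" if "x \<in> out_tree_leaves k l \<times> {0..<l}" for x
    using \<sigma> that by (auto simp: subgraph_embedding_def)
  have "inj_on \<pi> Q"
    using \<sigma>_inj p disj unfolding \<pi>_def Q_def by (rule inj_on_star_legs)
  moreover have "\<pi> ` Q \<inter> \<psi> ` out_tree_V k l = {}"
    using avoid \<pi>_star unfolding Q_def by fastforce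
  ultimately have "inj_on (case_sum \<psi> \<pi>) (T_V k l)"
    unfolding T_V_eq Q_def[symmetric] using \<psi>
    by (intro inj_on_case_sumI) (auto simp: subgraph_embedding_def)
  moreover have "case_sum \<psi> \<pi> ` T_V k l \<subseteq> V"
  proof -
    have "\<pi> x \<in> V" if "x \<in> Q" for x
    proof -
      obtain xs i j where x: "x = (xs, i, j)"
        by (cases x)
      then have "xs \<in> out_tree_leaves k l"
        using that by (simp add: Q_def)
      then have "\<sigma> xs ` in_star_V k h \<subseteq> V"
        using \<sigma> by (simp add: subgraph_embedding_def)
      then show ?thesis
        using \<pi>_star that unfolding x by blast
    qed
    then show ?thesis
      using \<psi> unfolding T_V_eq Q_def[symmetric] subgraph_embedding_def by auto
  qed
  moreover have "(case_sum \<psi> \<pi> a, case_sum \<psi> \<pi> b) \<in> E" if "(a, b) \<in> T_E k l" for a b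
  proof -
    have \<psi>_E: "(\<psi> a, \<psi> b) \<in> E" if "(a, b) \<in> out_tree_E k l" for a b
      using \<psi> that by (auto simp: subgraph_embedding_def)
    have \<sigma>_E: "(\<sigma> xs a, \<sigma> xs b) \<in> E" if "xs \<in> out_tree_leaves k l" "(a, b) \<in> in_star_E k h" for xs a b
      using \<sigma>[OF that(1)] that(2) by (auto simp: subgraph_embedding_def)
    have centre: "\<sigma> xs (Inl ()) = \<psi> xs" if "xs \<in> out_tree_leaves k l" for xs
      using \<sigma>[OF that] by simp
    show ?thesis
      unfolding \<pi>_def
      by (rule T_E_mapped[where \<psi> = \<psi> and \<sigma> = \<sigma>, OF \<psi>_E \<sigma>_E centre p \<open>(a, b) \<in> T_E k l\<close>])
  qed
  ultimately show ?thesis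
    unfolding subgraph_embedding_def \<pi>_def by blast
qed

lemma contains_T_if_tree_leaves_are_star_centres:
  assumes \<psi>: "subgraph_embedding V E (out_tree_V k l) (out_tree_E k l) \<psi>"
    and leaves: "\<psi> ` out_tree_leaves k l \<subseteq> star_centres k h V E"
    and room: "card (out_tree_V k l) + l ^ Suc k * k < h"
  shows "contains_subgraph V E (T_V k l) (T_E k l)"
proof -
  let ?L = "out_tree_leaves k l \<times> {0..<l}" and ?F = "\<psi> ` out_tree_V k l"
  have "\<forall>xs\<in>out_tree_leaves k l. \<exists>\<sigma>.
          subgraph_embedding V E (in_star_V k h) (in_star_E k h) \<sigma> \<and> \<sigma> (Inl ()) = \<psi> xs"
    using leaves by (simp add: image_subset_iff mem_star_centres)
  then obtain \<sigma> where \<sigma>: "\<And>xs. xs \<in> out_tree_leaves k l \<Longrightarrow>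
      subgraph_embedding V E (in_star_V k h) (in_star_E k h) (\<sigma> xs) \<and> \<sigma> xs (Inl ()) = \<psi> xs"
    by metis
  have "\<exists>p. (\<forall>x\<in>?L. p x \<in> {0..<h} \<and> star_leg k (\<sigma> (fst x)) (p x) \<inter> ?F = {})
            \<and> disjoint_family_on (\<lambda>x. star_leg k (\<sigma> (fst x)) (p x)) ?L"
  proof (rule disjoint_choice[where S = "\<lambda>x. star_leg k (\<sigma> (fst x))" and s = k])
    show "finite ?L" "finite ?F"
      by (simp_all add: finite_out_tree_leaves finite_out_tree_V)
    show "card ?F + card ?L * k < card {0..<h}"
      using card_image_le[OF finite_out_tree_V, of \<psi> k l] room
      by (simp add: card_cartesian_product card_out_tree_leaves mult.commute)
    show "finite (star_leg k (\<sigma> (fst x)) q) \<and> card (star_leg k (\<sigma> (fst x)) q) \<le> k" for x q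
      unfolding star_leg_def using card_image_le[of "{0..<k}"] by simp
    show "disjoint_family_on (star_leg k (\<sigma> (fst x))) {0..<h}" if "x \<in> ?L" for x
      using \<sigma> that by (auto simp: disjoint_family_on_star_leg subgraph_embedding_def)
  qed
  then obtain p where
    p: "\<forall>x\<in>?L. p x \<in> {0..<h} \<and> star_leg k (\<sigma> (fst x)) (p x) \<inter> ?F = {}"
    and disj: "disjoint_family_on (\<lambda>x. star_leg k (\<sigma> (fst x)) (p x)) ?L"
    by blast
  have p_lt: "p x < h" if "x \<in> ?L" for x
    using bspec[OF p that] by simp
  have avoid: "star_leg k (\<sigma> (fst x)) (p x) \<inter> ?F = {}" if "x \<in> ?L" for x
    using bspec[OF p that] by (rule conjunct2)
  from T_embedding_from_tree_and_legs[OF \<psi> \<sigma> p_lt avoid disj]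
  have "subgraph_embedding V E (T_V k l) (T_E k l)
          (case_sum \<psi> (\<lambda>(xs, i, j). \<sigma> xs (Inr (p (xs, i), j))))" .
  then show ?thesis
    by (auto simp: contains_subgraph_iff_embedding)
qed

theorem theorem3p3:
  fixes f :: "nat \<Rightarrow> nat \<Rightarrow> int" and k l :: nat
    and V :: "nat set" and E :: "(nat \<times> nat) set"
  assumes hf: "\<And>k h (V' :: nat set) (E' :: (nat \<times> nat) set).
                 k \<ge> 1 \<Longrightarrow> h \<ge> 1 \<Longrightarrow> is_digraph V' E' \<Longrightarrow>
                 int (min_out_degree V' E') \<ge> f k h \<Longrightarrow>
                 contains_subgraph V' E' (in_star_V k h) (in_star_E k h)"
    and hk: "k \<ge> 1" and hl: "l \<ge> 2"
    and G: "is_digraph V E"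
    and deg: "int (min_out_degree V E) \<ge> f k (3 * k * l ^ (k + 1)) + int (2 * k * l ^ k)"
  shows "contains_subgraph V E (T_V k l) (T_E k l)"
proof -
  define H where "H = 3 * k * l ^ (k + 1)"
  define d where "d = nat (f k H)"
  define m where "m = 2 * l ^ k"
  have "H \<ge> 1"
    using hk hl by (simp add: H_def)
  have star: "contains_subgraph S F (in_star_V k H) (in_star_E k H)"
    if "is_digraph S F" "d \<le> min_out_degree S F" for S :: "nat set" and F
    using hf[OF hk \<open>H \<ge> 1\<close> that(1)] that(2) by (simp add: d_def nat_le_iff)
  have "d \<ge> 1"
    using star hk \<open>H \<ge> 1\<close> by (rule in_star_forcing_degree_pos)
  then have "int d = f k H"
    by (simp add: d_def)
  then have "int (d + k * m) \<le> int (min_out_degree V E)"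
    using deg[folded H_def] by (simp add: m_def algebra_simps)
  then have "d + k * m \<le> min_out_degree V E"
    by (rule of_nat_le_iff[THEN iffD1])
  moreover have "card (out_tree_V k l) < m"
    using card_out_tree_V_less[OF hl] by (simp add: m_def)
  ultimately obtain \<psi> where \<psi>: "subgraph_embedding V E (out_tree_V k l) (out_tree_E k l) \<psi>"
    and "\<psi> ` out_tree_leaves k l \<subseteq> star_centres k H V E"
    using out_tree_with_leaves_at_star_centres[OF star hk \<open>H \<ge> 1\<close> G] by blast
  moreover have "card (out_tree_V k l) + l ^ Suc k * k < H"
    unfolding H_def using hl hk by (rule card_out_tree_V_plus_legs_less)
  ultimately show ?thesis
    by (rule contains_T_if_tree_leaves_are_star_centres)
qed

end
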